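(* Let $(A_1,\dots,A_{n-1})$ and $(B_1,\dots,B_{n-1})$ be the fundamental operator tuples of a $\Gamma_n$-contraction $(S_1,\dots,S_{n-1},P)$ and of its adjoint $(S_1^*,\dots,S_{n-1}^*,P^* )$ respectively. Then for each $i=1,\dots,n-1$, \[ (A_i^*+A_{n-i}z)\Theta_{P^*}(z)=\Theta_{P^*}(z)(B_i+B_{n-i}^*z)\quad\text{for all }z\in\mathbb D. \]
   Context: $\Gamma_n=\pi_n(\overline{\mathbb D}^n)$ with $\pi_n$ the symmetrization map. A $\Gamma_n$-contraction is a commuting tuple with Taylor joint spectrum in $\Gamma_n$ and $\|f(\cdot)\|\le\sup_{\Gamma_n}|f|$ for polynomials. $D_T=(I-T^*T)^{1/2}$, $\mathcal D_T=\overline{\operatorname{Ran}}D_T$. The fundamental operator tuple of a $\Gamma_n$-contraction $(S_1,\dots,S_{n-1},P)$ is the unique $(F_1,\dots,F_{n-1})$ in $\mathcal B(\mathcal D_P)$ with $S_i-S_{n-i}^*P=D_PF_iD_P$. The characteristic function of a contraction $T$ is $\Theta_T(z)=[-T+zD_{T^*}(I-zT^* )^{-1}D_T]|_{\mathcal D_T}:\mathcal D_T\to\mathcal D_{T^*}$, $z\in\mathbb D$; thus $\Theta_{P^*}(z):\mathcal D_{P^*}\to\mathcal D_P$. *)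

theory Defs
  imports "HOL-Analysis.Analysis"
begin

text \<open>A complex Hilbert space: a real Banach space with a compatible complex scalar
multiplication and a complex inner product (conjugate linear in the first argument)
inducing the norm.\<close>

class chilbert = banach +
  fixes scaleC :: "complex \<Rightarrow> 'a \<Rightarrow> 'a"
  fixes cinner :: "'a \<Rightarrow> 'a \<Rightarrow> complex"
  assumes scaleC_add_right: "scaleC a (x + y) = scaleC a x + scaleC a y"
    and scaleC_add_left: "scaleC (a + b) x = scaleC a x + scaleC b x"
    and scaleC_scaleC: "scaleC a (scaleC b x) = scaleC (a * b) x"
    and scaleC_one: "scaleC 1 x = x"
    and scaleR_scaleC: "scaleR r x = scaleC (complex_of_real r) x"
    and cinner_commute: "cinner x y = cnj (cinner y x)"
    and cinner_add_left: "cinner (x + y) z = cinner x z + cinner y z"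
    and cinner_scaleC_left: "cinner (scaleC a x) y = cnj a * cinner x y"
    and norm_cinner: "complex_of_real ((norm x)\<^sup>2) = cinner x x"

definition bop :: "('a::chilbert \<Rightarrow> 'a) \<Rightarrow> bool" where
  "bop T \<longleftrightarrow> bounded_linear T \<and> (\<forall>a x. T (scaleC a x) = scaleC a (T x))"

definition adj :: "('a::chilbert \<Rightarrow> 'a) \<Rightarrow> ('a \<Rightarrow> 'a)" where
  "adj T = (THE S. \<forall>x y. cinner (T x) y = cinner x (S y))"

definition positive_op :: "('a::chilbert \<Rightarrow> 'a) \<Rightarrow> bool" where
  "positive_op S \<longleftrightarrow> bop S \<and> (\<forall>x. Im (cinner (S x) x) = 0 \<and> Re (cinner (S x) x) \<ge> 0)"

definition op_sqrt :: "('a::chilbert \<Rightarrow> 'a) \<Rightarrow> ('a \<Rightarrow> 'a)" where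
  "op_sqrt A = (THE S. positive_op S \<and> S \<circ> S = A)"

definition op_inv :: "('a::chilbert \<Rightarrow> 'a) \<Rightarrow> ('a \<Rightarrow> 'a)" where
  "op_inv T = (THE S. bop S \<and> S \<circ> T = id \<and> T \<circ> S = id)"

definition defect :: "('a::chilbert \<Rightarrow> 'a) \<Rightarrow> ('a \<Rightarrow> 'a)" where
  "defect T = op_sqrt (\<lambda>x. x - adj T (T x))"

definition defect_space :: "('a::chilbert \<Rightarrow> 'a) \<Rightarrow> 'a set" where
  "defect_space T = closure (range (defect T))"

text \<open>B(M) for a closed subspace M, realised inside B(H) as the operators that map M
into M and vanish on the orthogonal complement of M.  On such operators the Hilbert
space adjoint in H coincides with the adjoint in B(M).\<close>
definition ops_on :: "'a::chilbert set \<Rightarrow> ('a \<Rightarrow> 'a) set" where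
  "ops_on M = {F. bop F \<and> F ` M \<subseteq> M \<and> (\<forall>x. (\<forall>m\<in>M. cinner m x = 0) \<longrightarrow> F x = 0)}"

text \<open>Characteristic function
  Theta_T(z) = -T + z D_{T^*} (I - z T^*)^{-1} D_T, meaningful on the defect space of T.\<close>
definition char_fn :: "('a::chilbert \<Rightarrow> 'a) \<Rightarrow> complex \<Rightarrow> 'a \<Rightarrow> 'a" where
  "char_fn T z x = - T x + scaleC z (defect (adj T) (op_inv (\<lambda>y. y - scaleC z (adj T y)) (defect T x)))"

definition esym :: "nat \<Rightarrow> nat \<Rightarrow> (nat \<Rightarrow> complex) \<Rightarrow> complex" where
  "esym n k z = (\<Sum>K\<in>{K. K \<subseteq> {1..n} \<and> card K = k}. \<Prod>j\<in>K. z j)"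

text \<open>Gamma_n = pi_n(closed polydisc), points encoded as v with v 1..v (n-1) = s_1..s_(n-1),
v n = p, and v j = 0 for all other j.\<close>
definition gamma_set :: "nat \<Rightarrow> (nat \<Rightarrow> complex) set" where
  "gamma_set n = {v. \<exists>z. (\<forall>j\<in>{1..n}. cmod (z j) \<le> 1)
      \<and> (\<forall>i\<in>{1..n-1}. v i = esym n i z) \<and> v n = (\<Prod>j\<in>{1..n}. z j)
      \<and> (\<forall>j. j \<notin> {1..n} \<longrightarrow> v j = 0)}"

datatype cpoly = PConst complex | PVar nat | PAdd cpoly cpoly | PMul cpoly cpoly

fun pvars :: "cpoly \<Rightarrow> nat set" where
  "pvars (PConst c) = {}"
| "pvars (PVar i) = {i}"
| "pvars (PAdd p q) = pvars p \<union> pvars q"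
| "pvars (PMul p q) = pvars p \<union> pvars q"

fun peval :: "(nat \<Rightarrow> complex) \<Rightarrow> cpoly \<Rightarrow> complex" where
  "peval v (PConst c) = c"
| "peval v (PVar i) = v i"
| "peval v (PAdd p q) = peval v p + peval v q"
| "peval v (PMul p q) = peval v p * peval v q"

fun opeval :: "(nat \<Rightarrow> 'a::chilbert \<Rightarrow> 'a) \<Rightarrow> cpoly \<Rightarrow> 'a \<Rightarrow> 'a" where
  "opeval V (PConst c) = (\<lambda>x. scaleC c x)"
| "opeval V (PVar i) = V i"
| "opeval V (PAdd p q) = (\<lambda>x. opeval V p x + opeval V q x)"
| "opeval V (PMul p q) = opeval V p \<circ> opeval V q"

definition gtuple :: "nat \<Rightarrow> (nat \<Rightarrow> 'a \<Rightarrow> 'a) \<Rightarrow> ('a \<Rightarrow> 'a) \<Rightarrow> nat \<Rightarrow> 'a \<Rightarrow> 'a" where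
  "gtuple n S P = (\<lambda>i. if i = n then P else S i)"

text \<open>Gamma_n-contraction: commuting tuple of bounded operators with Gamma_n a spectral
set.  The Taylor-spectrum condition is implied by the polynomial inequality because
Gamma_n is polynomially convex.\<close>
definition gamma_contraction :: "nat \<Rightarrow> (nat \<Rightarrow> 'a::chilbert \<Rightarrow> 'a) \<Rightarrow> ('a \<Rightarrow> 'a) \<Rightarrow> bool" where
  "gamma_contraction n S P \<longleftrightarrow>
     (\<forall>i\<in>{1..n}. bop (gtuple n S P i))
   \<and> (\<forall>i\<in>{1..n}. \<forall>j\<in>{1..n}. gtuple n S P i \<circ> gtuple n S P j = gtuple n S P j \<circ> gtuple n S P i)
   \<and> (\<forall>f. pvars f \<subseteq> {1..n} \<longrightarrow>
        onorm (opeval (gtuple n S P) f) \<le> (SUP v\<in>gamma_set n. cmod (peval v f)))"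

definition fundamental_tuple :: "nat \<Rightarrow> (nat \<Rightarrow> 'a::chilbert \<Rightarrow> 'a) \<Rightarrow> ('a \<Rightarrow> 'a) \<Rightarrow> (nat \<Rightarrow> 'a \<Rightarrow> 'a) \<Rightarrow> bool" where
  "fundamental_tuple n S P F \<longleftrightarrow>
     (\<forall>i\<in>{1..n-1}. F i \<in> ops_on (defect_space P)
        \<and> (\<lambda>x. S i x - adj (S (n - i)) (P x)) = defect P \<circ> F i \<circ> defect P)"

end

(*
  Write D = D_P and E = D_{P^*}.  On the range of E the characteristic function is
  Theta(z) (E w) = D v with v = (I - zP)^{-1} (z w - P^* w).  Applying D to both sides of the
  identity, the fundamental equations D A_i D = S_i - S_{n-i}^* P and
  E B_i E = S_i^* - S_{n-i} P^* (and their adjoints), the relations P D = E P and P^* E = D P^*,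
  and the commutativity of S_i with P turn both sides into
  z S_i^* w - P^* S_i^* w + z S_{n-i} v - P^* S_{n-i} v.  Both sides are also orthogonal to
  ker D, so they agree on the range of E, hence by continuity on its closure, the defect
  space of P^*.

  The defect operator D_P is the binomial series of sqrt(1 - t) evaluated at P^* P, which makes
  P D_P = D_{P^*} P immediate; uniqueness of positive square roots identifies the series with
  D_P.  The inverse (I - zP)^{-1} is the Neumann series.
*)
theory Submission
  imports Defs
begin

subsection \<open>Sesquilinear forms and bounded operators\<close>

lemma scaleC_zero_left [simp]: "scaleC 0 x = (0::'a::chilbert)"
  using scaleC_add_left[of 0 0 x] by simp

lemma scaleC_zero_right [simp]: "scaleC a (0::'a::chilbert) = 0"
  using scaleC_add_right[of a 0 0] by simp

lemma scaleC_minus_right: "scaleC a (- x) = - scaleC a (x::'a::chilbert)"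
  using scaleC_add_right[of a x "- x"] by (simp add: eq_neg_iff_add_eq_0 add.commute)

lemma scaleC_diff_right: "scaleC a (x - y) = scaleC a x - scaleC a (y::'a::chilbert)"
  by (simp only: diff_conv_add_uminus scaleC_add_right scaleC_minus_right)

lemma cinner_add_right: "cinner x (y + z) = cinner x y + cinner x (z::'a::chilbert)"
  by (subst (1 2 3) cinner_commute) (simp add: cinner_add_left)

lemma cinner_scaleC_right: "cinner x (scaleC a y) = a * cinner x (y::'a::chilbert)"
  by (subst (1 2) cinner_commute) (simp add: cinner_scaleC_left)

lemma cinner_zero_left [simp]: "cinner 0 (x::'a::chilbert) = 0"
  using cinner_add_left[of 0 0 x] by simp

lemma cinner_zero_right [simp]: "cinner x (0::'a::chilbert) = 0"
  using cinner_add_right[of x 0 0] by simp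

lemma cinner_minus_left: "cinner (- x) y = - cinner x (y::'a::chilbert)"
  using cinner_add_left[of x "- x" y] by (simp add: eq_neg_iff_add_eq_0 add.commute)

lemma cinner_minus_right: "cinner x (- y) = - cinner x (y::'a::chilbert)"
  using cinner_add_right[of x y "- y"] by (simp add: eq_neg_iff_add_eq_0 add.commute)

lemma cinner_diff_left: "cinner (x - y) z = cinner x z - cinner y (z::'a::chilbert)"
  by (simp only: diff_conv_add_uminus cinner_add_left cinner_minus_left)

lemma cinner_diff_right: "cinner x (y - z) = cinner x y - cinner x (z::'a::chilbert)"
  by (simp only: diff_conv_add_uminus cinner_add_right cinner_minus_right)

lemma cinner_scaleR_left: "cinner (scaleR r x) y = of_real r * cinner x (y::'a::chilbert)"
  by (simp add: scaleR_scaleC cinner_scaleC_left)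

lemma cinner_scaleR_right: "cinner x (scaleR r y) = of_real r * cinner x (y::'a::chilbert)"
  by (simp add: scaleR_scaleC cinner_scaleC_right)

lemma cinner_self: "cinner x (x::'a::chilbert) = complex_of_real ((norm x)\<^sup>2)"
  by (rule norm_cinner[symmetric])

lemma Re_cinner_self: "Re (cinner x (x::'a::chilbert)) = (norm x)\<^sup>2"
  by (simp add: cinner_self)

lemma cinner_self_eq_0: "cinner x x = 0 \<longleftrightarrow> (x::'a::chilbert) = 0"
  by (simp add: cinner_self)

lemma norm_scaleC: "norm (scaleC a x) = cmod a * norm (x::'a::chilbert)"
proof -
  have "complex_of_real ((norm (scaleC a x))\<^sup>2) = cnj a * a * cinner x x"
    by (simp only: norm_cinner cinner_scaleC_left cinner_scaleC_right mult_ac)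
  also have "\<dots> = complex_of_real ((cmod a * norm x)\<^sup>2)"
    by (simp add: cinner_self power_mult_distrib mult.commute[of "cnj a"] complex_norm_square[symmetric])
  finally have "(norm (scaleC a x))\<^sup>2 = (cmod a * norm x)\<^sup>2"
    using of_real_eq_iff by blast
  then show ?thesis
    by (simp add: power2_eq_iff_nonneg)
qed

lemma norm_add_sq: "(norm (x + y))\<^sup>2 = (norm x)\<^sup>2 + (norm y)\<^sup>2 + 2 * Re (cinner x (y::'a::chilbert))"
proof -
  have "Re (cinner y x) = Re (cinner x y)"
    by (subst cinner_commute) simp
  then show ?thesis
    by (simp flip: Re_cinner_self add: cinner_add_left cinner_add_right)
qed

lemma norm_diff_sq: "(norm (x - y))\<^sup>2 = (norm x)\<^sup>2 + (norm y)\<^sup>2 - 2 * Re (cinner x (y::'a::chilbert))"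
  using norm_add_sq[of x "- y"] by (simp add: cinner_minus_right)

lemma Re_cinner_le: "Re (cinner x y) \<le> norm x * norm (y::'a::chilbert)"
proof -
  have "(norm (x + y))\<^sup>2 \<le> (norm x + norm y)\<^sup>2"
    by (simp add: power_mono norm_triangle_ineq)
  then show ?thesis by (simp add: norm_add_sq power2_sum)
qed

lemma cinner_Cauchy_Schwarz: "cmod (cinner x y) \<le> norm x * norm (y::'a::chilbert)"
proof -
  \<comment> \<open>rotate x so that the inner product becomes real and nonnegative\<close>
  define a where "a = sgn (cinner x y)"
  have "cnj a * cinner x y = complex_of_real (cmod (cinner x y))"
  proof (cases "cinner x y = 0")
    case False
    have "cnj a * cinner x y = complex_of_real (inverse (cmod (cinner x y))) * (cinner x y * cnj (cinner x y))"
      unfolding a_def sgn_div_norm scaleR_conv_of_real by (simp add: mult.commute mult.left_commute)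
    also have "\<dots> = complex_of_real (inverse (cmod (cinner x y)) * (cmod (cinner x y))\<^sup>2)"
      by (simp only: complex_norm_square[symmetric] of_real_mult)
    finally show ?thesis using False by (simp add: power2_eq_square)
  qed (simp add: a_def)
  then have "cmod (cinner x y) = Re (cinner (scaleC a x) y)"
    by (simp add: cinner_scaleC_left)
  also have "\<dots> \<le> norm (scaleC a x) * norm y" by (rule Re_cinner_le)
  also have "\<dots> \<le> norm x * norm y"
    by (auto intro!: mult_right_mono simp: norm_scaleC a_def norm_sgn)
  finally show ?thesis .
qed

lemma bounded_bilinear_cinner: "bounded_bilinear (cinner :: 'a::chilbert \<Rightarrow> 'a \<Rightarrow> complex)"
proof
  fix a a' b b' :: 'a and r :: real
  show "cinner (a + a') b = cinner a b + cinner a' b" by (rule cinner_add_left)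
  show "cinner a (b + b') = cinner a b + cinner a b'" by (rule cinner_add_right)
  show "cinner (scaleR r a) b = scaleR r (cinner a b)" by (simp add: cinner_scaleR_left scaleR_conv_of_real)
  show "cinner a (scaleR r b) = scaleR r (cinner a b)" by (simp add: cinner_scaleR_right scaleR_conv_of_real)
  show "\<exists>K. \<forall>a b::'a. norm (cinner a b) \<le> norm a * norm b * K"
    by (rule exI[of _ 1]) (simp add: cinner_Cauchy_Schwarz)
qed

lemma cinner_ext: "(\<And>y. cinner y x = cinner y x') \<Longrightarrow> x = (x'::'a::chilbert)"
  using cinner_self_eq_0[of "x - x'"] by (simp add: cinner_diff_right)

lemma closed_orthogonal: "closed {m::'a::chilbert. cinner m k = 0}"
  by (intro closed_Collect_eq continuous_intros
      linear_continuous_on bounded_bilinear.bounded_linear_left[OF bounded_bilinear_cinner])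

lemma bounded_linear_scaleC: "bounded_linear (scaleC a :: 'a::chilbert \<Rightarrow> 'a)"
  by (rule bounded_linear_intro[where K="cmod a"])
    (simp_all add: scaleC_add_right scaleR_scaleC scaleC_scaleC mult.commute norm_scaleC)

lemma bop_bounded_linear: "bop T \<Longrightarrow> bounded_linear T"
  by (simp add: bop_def)

lemma bop_scaleC: "bop T \<Longrightarrow> T (scaleC a x) = scaleC a (T x)"
  by (simp add: bop_def)

lemma bop_add: "bop T \<Longrightarrow> T (x + y) = T x + T y"
  by (simp add: linear_add bounded_linear.linear bop_bounded_linear)

lemma bop_diff: "bop T \<Longrightarrow> T (x - y) = T x - T y"
  by (simp add: linear_diff bounded_linear.linear bop_bounded_linear)

lemma bop_neg: "bop T \<Longrightarrow> T (- x) = - T x"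
  by (simp add: linear_neg bounded_linear.linear bop_bounded_linear)

lemma bop_zero: "bop T \<Longrightarrow> T 0 = 0"
  by (simp add: linear_0 bounded_linear.linear bop_bounded_linear)

lemmas bop_linear = bop_add bop_diff bop_neg bop_zero bop_scaleC

lemma bop_compose: "bop S \<Longrightarrow> bop T \<Longrightarrow> bop (\<lambda>x. S (T x))"
  unfolding bop_def by (auto intro: bounded_linear_compose)

lemma bop_plus: "bop S \<Longrightarrow> bop T \<Longrightarrow> bop (\<lambda>x. S x + T x)"
  unfolding bop_def by (auto intro: bounded_linear_add simp: scaleC_add_right)

lemma bop_uminus: "bop S \<Longrightarrow> bop (\<lambda>x. - S x)"
  unfolding bop_def by (auto intro: bounded_linear_minus simp: scaleC_minus_right)

lemma bop_scaleC_op: "bop S \<Longrightarrow> bop (\<lambda>x. scaleC c (S x))"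
  unfolding bop_def
  by (auto intro: bounded_linear_compose[OF bounded_linear_scaleC] simp: scaleC_scaleC mult.commute)

lemma eq_on_closure_range:
  assumes "bounded_linear f" "bounded_linear g"
    and "\<And>w. f (E w) = g (E w)" and "x \<in> closure (range E)"
  shows "f x = g x"
proof -
  have "closure (range E) \<subseteq> {x. f x = g x}"
    using assms by (intro closure_minimal closed_Collect_eq linear_continuous_on) auto
  then show ?thesis using assms(4) by auto
qed

subsection \<open>Riesz representation and adjoints\<close>

lemma real_linear_coeff_zero:
  fixes c K \<delta> :: real
  assumes "\<delta> > 0" and quad: "\<And>t. \<bar>t\<bar> \<le> \<delta> \<Longrightarrow> 2 * t * c \<le> t\<^sup>2 * K"
  shows "c = 0"
proof (rule ccontr)
  assume c: "c \<noteq> 0"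
  define s where "s = min \<delta> (\<bar>c\<bar> / (\<bar>K\<bar> + 1))"
  have "s \<le> \<bar>c\<bar> / (\<bar>K\<bar> + 1)" by (simp add: s_def)
  then have "s * (\<bar>K\<bar> + 1) \<le> \<bar>c\<bar>"
    using pos_le_divide_eq[of "\<bar>K\<bar> + 1"] by simp
  then have s: "s > 0" "s \<le> \<delta>" "s * (\<bar>K\<bar> + 1) \<le> \<bar>c\<bar>"
    using \<open>\<delta> > 0\<close> c by (simp_all add: s_def add_pos_nonneg)
  define t where "t = (if c > 0 then s else - s)"
  have "2 * t * c \<le> t\<^sup>2 * K"
    using s by (intro quad) (simp add: t_def)
  moreover have "t * c = s * \<bar>c\<bar>" "t\<^sup>2 = s\<^sup>2"
    by (auto simp: t_def)
  ultimately have "2 * s * \<bar>c\<bar> \<le> s\<^sup>2 * K"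
    by (metis mult.assoc)
  then have "2 * \<bar>c\<bar> \<le> s * K"
    using s by (simp add: power2_eq_square mult.assoc mult_le_cancel_left_pos)
  also have "\<dots> < s * (\<bar>K\<bar> + 1)" using s by (simp add: abs_le_iff)
  finally show False using s by simp
qed

context
  fixes h :: "'a::chilbert \<Rightarrow> real" and M :: real
  assumes lin: "bounded_linear h" and bound: "\<And>x. h x \<le> M * norm x" and M: "M > 0"
begin

lemma near_maximisers_close:
  assumes "norm a \<le> 1" "M - e \<le> h a" "norm b \<le> 1" "M - e \<le> h b" "e \<ge> 0"
  shows "(norm (a - b))\<^sup>2 \<le> 8 * e / M"
proof -
  define d where "d = 2 * e / M"
  have "2 * M - 2 * e \<le> h (a + b)"
    using assms by (simp add: linear_add[OF bounded_linear.linear[OF lin]])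
  also have "\<dots> \<le> M * norm (a + b)" by (rule bound)
  finally have sum_large: "2 - d \<le> norm (a + b)"
    using M by (simp add: d_def field_simps)
  have "(norm (a - b))\<^sup>2 + (norm (a + b))\<^sup>2 = 2 * (norm a)\<^sup>2 + 2 * (norm b)\<^sup>2"
    by (simp add: norm_add_sq norm_diff_sq)
  also have "\<dots> \<le> 4"
    using assms power_le_one[of "norm a" 2] power_le_one[of "norm b" 2] by simp
  finally have parallelogram: "(norm (a - b))\<^sup>2 \<le> 4 - (norm (a + b))\<^sup>2" by simp
  have "(norm (a - b))\<^sup>2 \<le> 4 * d"
  proof (cases "d \<le> 2")
    case True
    then have "(2 - d)\<^sup>2 \<le> (norm (a + b))\<^sup>2"
      using sum_large by (intro power_mono) auto
    then have "(norm (a - b))\<^sup>2 \<le> 4 * d - d\<^sup>2"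
      using parallelogram by (simp add: power2_diff)
    then show ?thesis by (smt (verit) zero_le_power2)
  next
    case False
    then show ?thesis using parallelogram by (smt (verit) zero_le_power2)
  qed
  then show ?thesis by (simp add: d_def)
qed

lemma near_maximising_sequence_Cauchy:
  assumes xs: "\<And>k. norm (xs k) \<le> 1" "\<And>k. M - inverse (real (Suc k)) < h (xs k)"
  shows "Cauchy xs"
proof (rule metric_CauchyI)
  fix e :: real assume "e > 0"
  obtain N :: nat where "8 / (M * e\<^sup>2) < real N"
    using reals_Archimedean2 by blast
  then have N: "8 / (M * e\<^sup>2) < real (Suc N)" by simp
  have "dist (xs m) (xs n) < e" if "N \<le> m" "N \<le> n" for m n
  proof -
    have "M - inverse (real (Suc N)) \<le> h (xs k)" if "N \<le> k" for k
    proof -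
      have "inverse (real (Suc k)) \<le> inverse (real (Suc N))"
        using that by (simp add: field_simps)
      then show ?thesis using xs(2)[of k] by linarith
    qed
    then have "(dist (xs m) (xs n))\<^sup>2 \<le> 8 * inverse (real (Suc N)) / M"
      unfolding dist_norm using that xs(1) by (intro near_maximisers_close) auto
    also have "\<dots> = 8 / (M * real (Suc N))"
      by (simp add: field_simps)
    also have "\<dots> < e\<^sup>2"
    proof -
      have "8 < e\<^sup>2 * (M * real (Suc N))"
        using N M \<open>e > 0\<close> by (simp add: pos_divide_less_eq mult_ac)
      then show ?thesis using M by (simp add: pos_divide_less_eq)
    qed
    finally show ?thesis using \<open>e > 0\<close> by (simp add: power_less_imp_less_base)
  qed
  then show "\<exists>N. \<forall>m\<ge>N. \<forall>n\<ge>N. dist (xs m) (xs n) < e" by blast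
qed

lemma maximiser_exists:
  assumes approx: "\<And>e. e > 0 \<Longrightarrow> \<exists>x. norm x \<le> 1 \<and> M - e < h x"
  shows "\<exists>x0. norm x0 = 1 \<and> h x0 = M"
proof -
  have "\<forall>k. \<exists>x. norm x \<le> 1 \<and> M - inverse (real (Suc k)) < h x"
    using approx by simp
  then obtain xs where xs: "\<And>k. norm (xs k) \<le> 1" "\<And>k. M - inverse (real (Suc k)) < h (xs k)"
    by metis
  then have "Cauchy xs" by (rule near_maximising_sequence_Cauchy)
  then obtain x0 where x0: "xs \<longlonglongrightarrow> x0"
    using Cauchy_convergent_iff convergent_def by blast
  have "norm x0 \<le> 1"
    by (rule LIMSEQ_le_const2[OF tendsto_norm[OF x0]]) (use xs(1) in auto)
  moreover have "M \<le> h x0"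
  proof (rule LIMSEQ_le_const)
    show "(\<lambda>k. h (xs k) + inverse (real (Suc k))) \<longlonglongrightarrow> h x0"
      using tendsto_add[OF bounded_linear.tendsto[OF lin x0] LIMSEQ_inverse_real_of_nat] by simp
    show "\<exists>N. \<forall>k\<ge>N. M \<le> h (xs k) + inverse (real (Suc k))"
      using xs(2) by (intro exI[of _ 0]) (auto simp: algebra_simps less_imp_le)
  qed
  moreover have "h x0 \<le> M * norm x0" by (rule bound)
  moreover have "M * norm x0 \<le> M"
    using \<open>norm x0 \<le> 1\<close> M mult_left_le[of "norm x0" M] by simp
  ultimately have "M \<le> M * norm x0" "h x0 = M" by linarith+
  then show ?thesis
    using \<open>norm x0 \<le> 1\<close> M by (intro exI[of _ x0]) (auto simp: mult_le_cancel_left1)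
qed

text \<open>Since h (x0 + t y) \<le> M |x0 + t y| for all real t, with equality at t = 0, the terms
  of first order in t must agree.\<close>

lemma maximiser_represents:
  assumes x0: "norm x0 = 1" "h x0 = M"
  shows "h y = M * Re (cinner y x0)"
proof -
  define b where "b = Re (cinner x0 y)"
  have "h y - M * b = 0"
  proof (rule real_linear_coeff_zero)
    show "M / (\<bar>h y\<bar> + 1) > 0" using M by simp
    fix t assume t: "\<bar>t\<bar> \<le> M / (\<bar>h y\<bar> + 1)"
    have "\<bar>t\<bar> * \<bar>h y\<bar> \<le> M / (\<bar>h y\<bar> + 1) * \<bar>h y\<bar>"
      using mult_right_mono[OF t abs_ge_zero] .
    also have "\<dots> \<le> M"
      using M by (simp add: field_simps)
    finally have "\<bar>t * h y\<bar> \<le> M" by (simp add: abs_mult)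
    then have pos: "0 \<le> M + t * h y" by linarith
    have "M + t * h y = h (x0 + scaleR t y)"
      by (simp add: linear_add[OF bounded_linear.linear[OF lin]] linear_scale[OF bounded_linear.linear[OF lin]] x0)
    also have "\<dots> \<le> M * norm (x0 + scaleR t y)" by (rule bound)
    finally have "(M + t * h y)\<^sup>2 \<le> M\<^sup>2 * (norm (x0 + scaleR t y))\<^sup>2"
      using pos by (metis power_mono power_mult_distrib)
    also have "(norm (x0 + scaleR t y))\<^sup>2 = 1 + 2 * t * b + t\<^sup>2 * (norm y)\<^sup>2"
      by (simp add: norm_add_sq x0 cinner_scaleR_right b_def power_mult_distrib)
    finally have "2 * t * M * (h y - M * b) + (t * h y)\<^sup>2 \<le> t\<^sup>2 * (M\<^sup>2 * (norm y)\<^sup>2)"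
      by (simp add: power2_eq_square algebra_simps)
    then have "2 * t * M * (h y - M * b) \<le> t\<^sup>2 * (M\<^sup>2 * (norm y)\<^sup>2)"
      using zero_le_power2[of "t * h y"] by linarith
    then show "2 * t * (h y - M * b) \<le> t\<^sup>2 * (M * (norm y)\<^sup>2)"
      using M by (simp add: power2_eq_square mult.commute mult.left_commute mult_le_cancel_left_pos)
  qed
  moreover have "Re (cinner y x0) = b"
    unfolding b_def by (subst cinner_commute) simp
  ultimately show ?thesis by simp
qed

end

lemma riesz_representation_real:
  fixes h :: "'a::chilbert \<Rightarrow> real"
  assumes lin: "bounded_linear h"
  shows "\<exists>w. \<forall>y. h y = Re (cinner y w)"
proof -
  define M where "M = Sup (h ` {x. norm x \<le> 1})"
  obtain K where K: "\<And>x. norm (h x) \<le> norm x * K" "K \<ge> 0"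
    using bounded_linear.nonneg_bounded[OF lin] by blast
  have bdd: "bdd_above (h ` {x. norm x \<le> 1})"
  proof (rule bdd_aboveI2)
    fix x :: 'a assume "x \<in> {x. norm x \<le> 1}"
    then show "h x \<le> K"
      using K(1)[of x] K(2) mult_right_mono[of "norm x" 1 K] by simp
  qed
  have h_le: "h x \<le> M" if "norm x \<le> 1" for x
    unfolding M_def using that bdd by (intro cSup_upper) auto
  have bound: "h x \<le> M * norm x" for x
  proof (cases "x = 0")
    case True then show ?thesis using linear_0[OF bounded_linear.linear[OF lin]] by simp
  next
    case False
    then have "h (scaleR (1 / norm x) x) \<le> M" by (intro h_le) simp
    then show ?thesis using False by (simp add: linear_scale[OF bounded_linear.linear[OF lin]] field_simps)
  qed
  show ?thesis
  proof (cases "M > 0")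
    case True
    have "h 0 \<in> h ` {x. norm x \<le> 1}" by simp
    then have "h ` {x. norm x \<le> 1} \<noteq> {}" by blast
    then have "\<exists>x. norm x \<le> 1 \<and> M - e < h x" if "e > 0" for e
      using less_cSup_iff[OF _ bdd, of "M - e"] that by (auto simp: M_def)
    then obtain x0 where "norm x0 = 1" "h x0 = M"
      using maximiser_exists[OF lin bound True] by blast
    then show ?thesis
      using maximiser_represents[OF lin bound True]
      by (intro exI[of _ "scaleR M x0"]) (simp add: cinner_scaleR_right)
  next
    case False
    have "M \<ge> 0" using h_le[of 0] linear_0[OF bounded_linear.linear[OF lin]] by simp
    then have "h y = 0" for y
      using bound[of y] bound[of "- y"] False linear_neg[OF bounded_linear.linear[OF lin]] by force
    then show ?thesis by (intro exI[of _ 0]) simp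
  qed
qed

lemma riesz_representation:
  fixes g :: "'a::chilbert \<Rightarrow> complex"
  assumes add: "\<And>x y. g (x + y) = g x + g y"
    and sc: "\<And>a x. g (scaleC a x) = cnj a * g x"
    and bd: "\<And>x. cmod (g x) \<le> norm x * K"
  shows "\<exists>w. \<forall>x. g x = cinner x w"
proof -
  have "bounded_linear (\<lambda>x. Re (g x))"
    by (rule bounded_linear_intro[where K=K])
      (auto simp: add scaleR_scaleC sc intro: order_trans[OF abs_Re_le_cmod bd])
  then obtain w where w: "\<And>y. Re (g y) = Re (cinner y w)" using riesz_representation_real by blast
  have "g x = cinner x w" for x
  proof (rule complex_eqI)
    show "Re (g x) = Re (cinner x w)" by (rule w)
    show "Im (g x) = Im (cinner x w)"
      using w[of "scaleC \<i> x"] by (simp add: sc cinner_scaleC_left)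
  qed
  then show ?thesis by blast
qed

lemma adj_exists:
  assumes "bop T"
  shows "\<exists>S. \<forall>x y. cinner (T x) y = cinner x (S y)"
proof -
  obtain K where K: "\<And>x. norm (T x) \<le> norm x * K"
    using bounded_linear.bounded[OF bop_bounded_linear[OF assms]] by blast
  have "\<exists>w. \<forall>x. cinner (T x) y = cinner x w" for y
  proof (rule riesz_representation[where K="K * norm y"])
    fix x
    have "cmod (cinner (T x) y) \<le> norm (T x) * norm y" by (rule cinner_Cauchy_Schwarz)
    also have "\<dots> \<le> norm x * K * norm y" using K[of x] by (intro mult_right_mono) auto
    finally show "cmod (cinner (T x) y) \<le> norm x * (K * norm y)" by (simp add: mult.assoc)
  qed (simp_all add: bop_linear[OF assms] cinner_add_left cinner_scaleC_left)
  then show ?thesis by metis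
qed

lemma adj_unique:
  assumes "\<And>x y. cinner (T x) y = cinner x (S y)"
  shows "adj T = S"
  unfolding adj_def
proof (rule the_equality)
  fix S' assume "\<forall>x y. cinner (T x) y = cinner x (S' y)"
  then show "S' = S"
    using assms by (intro ext cinner_ext) metis
qed (use assms in blast)

lemma adj_cinner: "bop T \<Longrightarrow> cinner (T x) y = cinner x (adj T y)"
  using adj_exists adj_unique by metis

lemma adj_cinner': "bop T \<Longrightarrow> cinner (adj T y) x = cinner y (T x)"
  by (metis adj_cinner cinner_commute)

lemma norm_adj_le:
  assumes "bop T" and bound: "\<And>x. norm (T x) \<le> norm x * K" and "K \<ge> 0"
  shows "norm (adj T y) \<le> norm y * K"
proof (cases "adj T y = 0")
  case False
  have "(norm (adj T y))\<^sup>2 = Re (cinner (T (adj T y)) y)"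
    by (simp add: adj_cinner[OF assms(1)] Re_cinner_self)
  also have "\<dots> \<le> norm (adj T y) * K * norm y"
    using Re_cinner_le order_trans mult_right_mono[OF bound norm_ge_zero] by blast
  finally show ?thesis
    using False by (simp add: power2_eq_square mult_ac)
qed (simp add: \<open>K \<ge> 0\<close>)

lemma adj_bop:
  assumes T: "bop T"
  shows "bop (adj T)"
proof -
  obtain K where K: "\<And>x. norm (T x) \<le> norm x * K" "K \<ge> 0"
    using bounded_linear.nonneg_bounded[OF bop_bounded_linear[OF T]] by blast
  have add: "adj T (x + y) = adj T x + adj T y" for x y
    by (rule cinner_ext) (simp add: adj_cinner[OF T, symmetric] cinner_add_right)
  have sc: "adj T (scaleC a x) = scaleC a (adj T x)" for a x
    by (rule cinner_ext) (simp add: adj_cinner[OF T, symmetric] cinner_scaleC_right)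
  have "bounded_linear (adj T)"
    by (rule bounded_linear_intro[where K=K]) (simp_all add: add scaleR_scaleC sc norm_adj_le[OF T K])
  then show ?thesis by (simp add: bop_def sc)
qed

lemma adj_adj: "bop T \<Longrightarrow> adj (adj T) = T"
  by (rule adj_unique) (rule adj_cinner')

lemma adj_compose: "bop S \<Longrightarrow> bop T \<Longrightarrow> adj (\<lambda>x. S (T x)) = (\<lambda>x. adj T (adj S x))"
  by (rule adj_unique) (simp add: adj_cinner)

lemma adj_minus: "bop S \<Longrightarrow> bop T \<Longrightarrow> adj (\<lambda>x. S x - T x) = (\<lambda>x. adj S x - adj T x)"
  by (rule adj_unique) (simp add: adj_cinner cinner_diff_left cinner_diff_right)

subsection \<open>The binomial series of the square root\<close>

text \<open>Coefficients of sqrt(1 - t) = sum_k sqrt_coeff k * t^k.\<close>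
definition sqrt_coeff :: "nat \<Rightarrow> real" where
  "sqrt_coeff k = ((1/2) gchoose k) * (-1) ^ k"

lemma sqrt_coeff_pochhammer: "sqrt_coeff k = pochhammer (-1/2) k / fact k"
proof -
  have "sqrt_coeff k = ((-1::real) ^ k * (-1) ^ k) * pochhammer (-1/2) k / fact k"
    unfolding sqrt_coeff_def gbinomial_pochhammer by (simp add: algebra_simps)
  then show ?thesis by (simp only: minus_one_mult_self mult_1)
qed

lemma sqrt_coeff_nonpos: "k \<ge> 1 \<Longrightarrow> sqrt_coeff k \<le> 0"
proof -
  assume "k \<ge> 1"
  then obtain m where m: "k = Suc m" by (cases k) auto
  have "pochhammer (-1/2::real) (Suc m) = (-1/2) * pochhammer (1/2) m"
    by (simp add: pochhammer_rec)
  moreover have "pochhammer (1/2::real) m \<ge> 0" by (rule pochhammer_nonneg) simp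
  ultimately show ?thesis
    unfolding sqrt_coeff_pochhammer m by (simp add: divide_nonpos_pos)
qed

lemma sqrt_coeff_partial_sum_nonneg: "0 \<le> (\<Sum>k\<le>m. sqrt_coeff k)"
proof -
  have "(\<Sum>k\<le>m. sqrt_coeff k) = (-1) ^ m * ((1/2 - 1) gchoose m)"
    unfolding sqrt_coeff_def by (rule gbinomial_sum_lower_neg)
  also have "\<dots> = ((-1::real) ^ m * (-1) ^ m) * pochhammer (1/2) m / fact m"
    by (simp add: gbinomial_pochhammer algebra_simps)
  also have "\<dots> = pochhammer (1/2) m / fact m" by (simp only: minus_one_mult_self mult_1)
  also have "\<dots> \<ge> 0" by (intro divide_nonneg_pos pochhammer_nonneg) auto
  finally show ?thesis .
qed

text \<open>All coefficients but the first are nonpositive, so the absolute partial sums are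
  2 - (partial sums) \<le> 2.\<close>

lemma summable_abs_sqrt_coeff: "summable (\<lambda>k. \<bar>sqrt_coeff k\<bar>)"
proof (rule bounded_imp_summable[of _ 2])
  fix m
  have "(\<Sum>k\<le>m. \<bar>sqrt_coeff k\<bar>) = 2 - (\<Sum>k\<le>m. sqrt_coeff k)"
  proof (induct m)
    case (Suc m)
    then show ?case using sqrt_coeff_nonpos[of "Suc m"] by simp
  qed (simp add: sqrt_coeff_def)
  then show "(\<Sum>k\<le>m. \<bar>sqrt_coeff k\<bar>) \<le> 2"
    using sqrt_coeff_partial_sum_nonneg[of m] by simp
qed simp

lemma summable_sqrt_coeff: "summable sqrt_coeff"
  using summable_abs_sqrt_coeff by (rule summable_rabs_cancel)

lemma suminf_sqrt_coeff_nonneg: "0 \<le> suminf sqrt_coeff"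
  by (rule LIMSEQ_le_const[OF summable_LIMSEQ'[OF summable_sqrt_coeff]])
    (auto intro: sqrt_coeff_partial_sum_nonneg)

text \<open>The Cauchy square of the series is 1 - t (Vandermonde's identity with 1/2 + 1/2 = 1).\<close>
lemma sqrt_coeff_convolution:
  "(\<Sum>i\<le>k. sqrt_coeff i * sqrt_coeff (k - i)) = (if k = 0 then 1 else if k = 1 then -1 else 0)"
proof -
  have "(\<Sum>i\<le>k. sqrt_coeff i * sqrt_coeff (k - i))
      = (\<Sum>i\<in>{0..k}. ((1/2) gchoose i) * ((1/2) gchoose (k - i))) * (-1) ^ k"
    unfolding sum_distrib_right atMost_atLeast0
  proof (rule sum.cong)
    fix i assume "i \<in> {0..k}"
    then have "(-1::real) ^ i * (-1) ^ (k - i) = (-1) ^ k"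
      by (simp add: power_add[symmetric])
    moreover have "sqrt_coeff i * sqrt_coeff (k - i)
        = ((1/2) gchoose i) * ((1/2) gchoose (k - i)) * ((-1) ^ i * (-1) ^ (k - i))"
      unfolding sqrt_coeff_def by (simp only: mult_ac)
    ultimately show "sqrt_coeff i * sqrt_coeff (k - i) = ((1/2) gchoose i) * ((1/2) gchoose (k - i)) * (-1) ^ k"
      by simp
  qed simp
  also have "\<dots> = (of_nat 1 gchoose k) * (-1) ^ k"
    by (simp only: gbinomial_Vandermonde) simp
  also have "\<dots> = of_nat (1 choose k) * (-1) ^ k" by (simp only: binomial_gbinomial)
  finally show ?thesis
    by (cases k; cases "k - 1") auto
qed

lemma norm_products_square_minus_triangle:
  fixes a :: "nat \<Rightarrow> 'a::real_normed_vector" and b :: "nat \<Rightarrow> 'b::real_normed_vector"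
  assumes a: "summable (\<lambda>k. norm (a k))" and b: "summable (\<lambda>k. norm (b k))"
  shows "(\<lambda>n. (\<Sum>(i, j)\<in>{..<n} \<times> {..<n}. norm (a i) * norm (b j))
      - (\<Sum>(i, j)\<in>{(i, j). i + j < n}. norm (a i) * norm (b j))) \<longlonglongrightarrow> 0"
proof -
  have "(\<lambda>n. (\<Sum>k<n. norm (a k)) * (\<Sum>k<n. norm (b k))) \<longlonglongrightarrow> (\<Sum>k. norm (a k)) * (\<Sum>k. norm (b k))"
    using a b by (intro tendsto_mult summable_LIMSEQ)
  then have square: "(\<lambda>n. \<Sum>(i, j)\<in>{..<n} \<times> {..<n}. norm (a i) * norm (b j))
      \<longlonglongrightarrow> (\<Sum>k. norm (a k)) * (\<Sum>k. norm (b k))"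
    by (simp add: sum_product sum.cartesian_product)
  have "(\<lambda>k. \<Sum>i\<le>k. norm (a i) * norm (b (k - i))) sums ((\<Sum>k. norm (a k)) * (\<Sum>k. norm (b k)))"
    using a b by (intro Cauchy_product_sums) simp_all
  then have triangle: "(\<lambda>n. \<Sum>(i, j)\<in>{(i, j). i + j < n}. norm (a i) * norm (b j))
      \<longlonglongrightarrow> (\<Sum>k. norm (a k)) * (\<Sum>k. norm (b k))"
    by (simp add: sums_def sum.triangle_reindex)
  show ?thesis using tendsto_diff[OF square triangle] by simp
qed

text \<open>The norm of the difference between the square and triangle partial sums is bounded
  by the corresponding difference for the norms, which tends to 0 by the scalar Cauchy product.\<close>

lemma Cauchy_product_sums_bilinear:
  fixes a :: "nat \<Rightarrow> 'a::banach" and b :: "nat \<Rightarrow> 'b::banach"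
  assumes bb: "bounded_bilinear pr"
    and a: "summable (\<lambda>k. norm (a k))" and b: "summable (\<lambda>k. norm (b k))"
  shows "(\<lambda>k. \<Sum>i\<le>k. pr (a i) (b (k - i))) sums pr (\<Sum>k. a k) (\<Sum>k. b k)"
proof -
  obtain K where K: "\<And>x y. norm (pr x y) \<le> norm x * norm y * K"
    using bounded_bilinear.bounded[OF bb] by blast
  define sq :: "nat \<Rightarrow> (nat \<times> nat) set" where "sq n = {..<n} \<times> {..<n}" for n
  define tri :: "nat \<Rightarrow> (nat \<times> nat) set" where "tri n = {(i, j). i + j < n}" for n
  have tri_sq: "tri n \<subseteq> sq n" for n by (auto simp: tri_def sq_def)
  have fin: "finite (sq n)" for n by (simp add: sq_def)
  define g where "g = (\<lambda>(i, j). pr (a i) (b j))"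
  define u where "u = (\<lambda>(i, j). norm (a i) * norm (b j))"
  have "(\<lambda>n. pr (\<Sum>k<n. a k) (\<Sum>k<n. b k)) \<longlonglongrightarrow> pr (\<Sum>k. a k) (\<Sum>k. b k)"
    by (intro bounded_bilinear.tendsto[OF bb] summable_LIMSEQ summable_norm_cancel[OF a]
        summable_norm_cancel[OF b])
  moreover have "pr (\<Sum>k<n. a k) (\<Sum>k<n. b k) = sum g (sq n)" for n
    by (subst bounded_bilinear.sum_left[OF bb])
      (simp add: bounded_bilinear.sum_right[OF bb] sum.cartesian_product sq_def g_def)
  ultimately have g_sq: "(\<lambda>n. sum g (sq n)) \<longlonglongrightarrow> pr (\<Sum>k. a k) (\<Sum>k. b k)"
    by simp
  have "(\<lambda>n. sum g (sq n) - sum g (tri n)) \<longlonglongrightarrow> 0"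
  proof (rule Lim_null_comparison)
    show "\<forall>\<^sub>F n in sequentially. norm (sum g (sq n) - sum g (tri n)) \<le> K * (sum u (sq n) - sum u (tri n))"
    proof (rule always_eventually, rule allI)
      fix n
      have "norm (sum g (sq n) - sum g (tri n)) = norm (sum g (sq n - tri n))"
        by (simp add: sum_diff fin tri_sq)
      also have "\<dots> \<le> (\<Sum>p\<in>sq n - tri n. K * u p)"
        by (rule sum_norm_le) (auto simp: g_def u_def intro: order_trans[OF K] simp: mult_ac)
      also have "\<dots> = K * (sum u (sq n) - sum u (tri n))"
        by (simp add: sum_distrib_left[symmetric] sum_diff fin tri_sq)
      finally show "norm (sum g (sq n) - sum g (tri n)) \<le> K * (sum u (sq n) - sum u (tri n))" .
    qed
    show "(\<lambda>n. K * (sum u (sq n) - sum u (tri n))) \<longlonglongrightarrow> 0"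
      using tendsto_mult_left[OF norm_products_square_minus_triangle[OF a b], of K]
      by (simp add: sq_def tri_def u_def)
  qed
  from tendsto_diff[OF g_sq this] have "(\<lambda>n. sum g (tri n)) \<longlonglongrightarrow> pr (\<Sum>k. a k) (\<Sum>k. b k)"
    by simp
  then show ?thesis
    by (simp add: sums_def tri_def g_def sum.triangle_reindex)
qed

subsection \<open>Positive square roots\<close>

definition contraction :: "('a::chilbert \<Rightarrow> 'a) \<Rightarrow> bool" where
  "contraction Q \<longleftrightarrow> bop Q \<and> (\<forall>x. norm (Q x) \<le> norm x)"

definition selfadjoint :: "('a::chilbert \<Rightarrow> 'a) \<Rightarrow> bool" where
  "selfadjoint Q \<longleftrightarrow> (\<forall>x y. cinner (Q x) y = cinner x (Q y))"

lemma funpow_intertwine: "(\<And>x. S (Q x) = Q' (S x)) \<Longrightarrow> S ((Q ^^ k) x) = (Q' ^^ k) (S x)"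
  by (induct k arbitrary: x) auto

lemma norm_funpow_le:
  fixes Q :: "'a::real_normed_vector \<Rightarrow> 'a"
  assumes "\<And>x. norm (Q x) \<le> norm x"
  shows "norm ((Q ^^ k) x) \<le> norm x"
proof (induct k)
  case (Suc k)
  have "norm ((Q ^^ Suc k) x) \<le> norm ((Q ^^ k) x)"
    using assms[of "(Q ^^ k) x"] by simp
  then show ?case using Suc by linarith
qed simp

lemma bounded_linear_funpow:
  fixes Q :: "'a::real_normed_vector \<Rightarrow> 'a"
  assumes "bounded_linear Q"
  shows "bounded_linear (Q ^^ k)"
proof (induct k)
  case (Suc k)
  then show ?case using bounded_linear_compose[OF assms Suc] by (simp add: comp_def)
qed (simp add: id_def)

lemma selfadjoint_funpow: "selfadjoint Q \<Longrightarrow> cinner ((Q ^^ k) x) y = cinner x ((Q ^^ k) y)"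
  by (induct k arbitrary: x y) (auto simp: selfadjoint_def funpow_swap1)

fun blinfun_power :: "('a::real_normed_vector \<Rightarrow>\<^sub>L 'a) \<Rightarrow> nat \<Rightarrow> ('a \<Rightarrow>\<^sub>L 'a)" where
  "blinfun_power A 0 = id_blinfun"
| "blinfun_power A (Suc k) = A o\<^sub>L blinfun_power A k"

lemma blinfun_power_apply: "blinfun_apply (blinfun_power A k) x = (blinfun_apply A ^^ k) x"
  by (induct k arbitrary: x) auto

lemma norm_blinfun_power: "norm A \<le> 1 \<Longrightarrow> norm (blinfun_power A k) \<le> 1"
proof (induct k)
  case (Suc k)
  have "norm (blinfun_power A (Suc k)) \<le> norm A * norm (blinfun_power A k)"
    by (simp add: norm_blinfun_compose)
  also have "\<dots> \<le> 1" using Suc by (simp add: mult_le_one)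
  finally show ?case .
qed (simp add: norm_blinfun_id_le)

definition sqrt_series :: "('a::chilbert \<Rightarrow> 'a) \<Rightarrow> 'a \<Rightarrow> 'a" where
  "sqrt_series Q = blinfun_apply (\<Sum>k. sqrt_coeff k *\<^sub>R blinfun_power (Blinfun Q) k)"

context
  fixes Q :: "'a::chilbert \<Rightarrow> 'a"
  assumes Q: "contraction Q"
begin

lemma blinfun_apply_Blinfun_contraction: "blinfun_apply (Blinfun Q) = Q"
  using Q by (simp add: contraction_def bop_bounded_linear bounded_linear_Blinfun_apply)

lemma summable_norm_sqrt_series:
  "summable (\<lambda>k. norm (sqrt_coeff k *\<^sub>R blinfun_power (Blinfun Q) k))"
proof (rule summable_comparison_test[OF _ summable_abs_sqrt_coeff], intro exI allI impI)
  fix k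
  have "norm (Blinfun Q) \<le> 1"
    using Q by (intro norm_blinfun_bound) (auto simp: contraction_def blinfun_apply_Blinfun_contraction)
  then show "norm (norm (sqrt_coeff k *\<^sub>R blinfun_power (Blinfun Q) k)) \<le> \<bar>sqrt_coeff k\<bar>"
    using norm_blinfun_power[of "Blinfun Q" k] by (simp add: mult_left_le)
qed

lemma sqrt_series_sums: "(\<lambda>k. sqrt_coeff k *\<^sub>R (Q ^^ k) x) sums sqrt_series Q x"
proof -
  have "(\<lambda>k. blinfun_apply (sqrt_coeff k *\<^sub>R blinfun_power (Blinfun Q) k) x) sums sqrt_series Q x"
    unfolding sqrt_series_def
    by (rule bounded_linear.sums[OF blinfun.bounded_linear_left
          summable_sums[OF summable_norm_cancel[OF summable_norm_sqrt_series]]])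
  moreover have "blinfun_apply (sqrt_coeff k *\<^sub>R blinfun_power (Blinfun Q) k) x = sqrt_coeff k *\<^sub>R (Q ^^ k) x" for k
    by (simp only: blinfun.scaleR_left blinfun_power_apply blinfun_apply_Blinfun_contraction)
  ultimately show ?thesis by simp
qed

end

lemma sqrt_series_intertwine:
  assumes "contraction Q" "contraction Q'"
    and S: "bounded_linear S" and SQ: "\<And>x. S (Q x) = Q' (S x)"
  shows "S (sqrt_series Q x) = sqrt_series Q' (S x)"
proof -
  have "(\<lambda>k. S (sqrt_coeff k *\<^sub>R (Q ^^ k) x)) sums S (sqrt_series Q x)"
    by (rule bounded_linear.sums[OF S sqrt_series_sums[OF assms(1)]])
  then have "(\<lambda>k. sqrt_coeff k *\<^sub>R (Q' ^^ k) (S x)) sums S (sqrt_series Q x)"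
    by (simp add: linear_scale[OF bounded_linear.linear[OF S]] funpow_intertwine[of S Q Q', OF SQ])
  then show ?thesis
    using sqrt_series_sums[OF assms(2)] sums_unique2 by blast
qed

lemma bop_sqrt_series:
  assumes Q: "contraction Q"
  shows "bop (sqrt_series Q)"
  unfolding bop_def
proof (intro conjI allI)
  show "bounded_linear (sqrt_series Q)"
    unfolding sqrt_series_def by (rule blinfun.bounded_linear_right)
  show "sqrt_series Q (scaleC a x) = scaleC a (sqrt_series Q x)" for a x
    using sqrt_series_intertwine[OF Q Q bounded_linear_scaleC] Q by (simp add: contraction_def bop_scaleC)
qed

lemma sqrt_series_square:
  assumes Q: "contraction Q"
  shows "sqrt_series Q (sqrt_series Q x) = x - Q x"
proof -
  define A where "A = Blinfun Q"
  define c where "c k = sqrt_coeff k *\<^sub>R blinfun_power A k" for k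
  have power_add: "blinfun_power A i o\<^sub>L blinfun_power A j = blinfun_power A (i + j)" for i j
    by (rule blinfun_eqI) (simp add: blinfun_power_apply funpow_add)
  have "c i o\<^sub>L c j = (sqrt_coeff i * sqrt_coeff j) *\<^sub>R blinfun_power A (i + j)" for i j
    by (simp add: c_def power_add bounded_bilinear.scaleR_left[OF bounded_bilinear_blinfun_compose]
        bounded_bilinear.scaleR_right[OF bounded_bilinear_blinfun_compose])
  then have "(\<Sum>i\<le>k. c i o\<^sub>L c (k - i)) = (\<Sum>i\<le>k. sqrt_coeff i * sqrt_coeff (k - i)) *\<^sub>R blinfun_power A k" for k
    by (simp add: scaleR_sum_left)
  moreover have "A o\<^sub>L id_blinfun = A" by (rule blinfun_eqI) simp
  ultimately have "(\<lambda>k. \<Sum>i\<le>k. c i o\<^sub>L c (k - i)) sums (id_blinfun - A)"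
    using sums_finite[of "{0, 1}" "\<lambda>k. (if k = 0 then 1 else if k = 1 then -1 else 0) *\<^sub>R blinfun_power A k"]
    by (simp add: sqrt_coeff_convolution)
  moreover have "(\<lambda>k. \<Sum>i\<le>k. c i o\<^sub>L c (k - i)) sums (suminf c o\<^sub>L suminf c)"
    using summable_norm_sqrt_series[OF Q] unfolding c_def A_def
    by (intro Cauchy_product_sums_bilinear bounded_bilinear_blinfun_compose)
  ultimately have "suminf c o\<^sub>L suminf c = id_blinfun - A"
    using sums_unique2 by blast
  then show ?thesis
    by (simp add: sqrt_series_def c_def[abs_def] A_def blinfun.diff_left
        blinfun_apply_Blinfun_contraction[OF Q] flip: blinfun_apply_blinfun_compose)
qed

text \<open>For k \<ge> 1 the coefficients are nonpositive and (Q^k x, x) \<le> |x|^2, so the series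
  for (sqrt_series Q x, x) is bounded below by (sum_k sqrt_coeff k) |x|^2 \<ge> 0.\<close>

lemma positive_op_sqrt_series:
  assumes Q: "contraction Q" and "selfadjoint Q"
  shows "positive_op (sqrt_series Q)"
  unfolding positive_op_def
proof (intro conjI allI)
  show "bop (sqrt_series Q)" by (rule bop_sqrt_series[OF Q])
  fix x :: 'a
  have sums: "(\<lambda>k. of_real (sqrt_coeff k) * cinner ((Q ^^ k) x) x) sums cinner (sqrt_series Q x) x"
    using bounded_linear.sums[OF bounded_bilinear.bounded_linear_left[OF bounded_bilinear_cinner]
        sqrt_series_sums[OF Q], of x]
    by (simp add: cinner_scaleR_left)
  have "Im (cinner ((Q ^^ k) x) x) = 0" for k
  proof -
    have "cinner ((Q ^^ k) x) x = cnj (cinner ((Q ^^ k) x) x)"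
      using selfadjoint_funpow[OF assms(2), of k x x] cinner_commute[of x "(Q ^^ k) x"] by simp
    then show ?thesis by (simp add: complex_eq_iff)
  qed
  then have "(\<lambda>k. 0) sums Im (cinner (sqrt_series Q x) x)"
    using bounded_linear.sums[OF bounded_linear_Im sums] by simp
  then show "Im (cinner (sqrt_series Q x) x) = 0"
    by (simp add: sums_unique2[OF _ sums_zero])
  have lower: "sqrt_coeff k * (norm x)\<^sup>2 \<le> sqrt_coeff k * Re (cinner ((Q ^^ k) x) x)" for k
  proof (cases "k = 0")
    case False
    have "Re (cinner ((Q ^^ k) x) x) \<le> norm ((Q ^^ k) x) * norm x" by (rule Re_cinner_le)
    also have "\<dots> \<le> (norm x)\<^sup>2"
      using Q norm_funpow_le[of Q k x] by (simp add: contraction_def power2_eq_square mult_right_mono)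
    finally show ?thesis
      using False by (intro mult_left_mono_neg sqrt_coeff_nonpos) auto
  qed (simp add: Re_cinner_self)
  have "(\<lambda>k. sqrt_coeff k * Re (cinner ((Q ^^ k) x) x)) sums Re (cinner (sqrt_series Q x) x)"
    using bounded_linear.sums[OF bounded_linear_Re sums] by simp
  then have "suminf sqrt_coeff * (norm x)\<^sup>2 \<le> Re (cinner (sqrt_series Q x) x)"
    by (rule sums_le[OF lower sums_mult2[OF summable_sums[OF summable_sqrt_coeff]]])
  moreover have "0 \<le> suminf sqrt_coeff * (norm x)\<^sup>2"
    by (simp add: suminf_sqrt_coeff_nonneg)
  ultimately show "0 \<le> Re (cinner (sqrt_series Q x) x)" by linarith
qed

lemma positive_op_selfadjoint:
  assumes S: "positive_op S"
  shows "selfadjoint S"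
proof -
  have b: "bop S" using S by (simp add: positive_op_def)
  define q where "q x y = cinner (S x) y - cinner x (S y)" for x y
  have diag: "q u u = 0" for u
  proof -
    have "Im (cinner (S u) u) = 0" using S by (simp add: positive_op_def)
    then show ?thesis
      unfolding q_def by (subst cinner_commute[of u]) (simp add: complex_eq_iff)
  qed
  have q_add: "q (u + v) (u + v) = q u u + q u v + q v u + q v v" for u v
    unfolding q_def by (simp add: bop_linear[OF b] cinner_add_left cinner_add_right algebra_simps)
  have q_scale: "q u (scaleC c v) = c * q u v" "q (scaleC c v) u = cnj c * q v u" for u v c
    unfolding q_def by (simp_all add: bop_scaleC[OF b] cinner_scaleC_left cinner_scaleC_right algebra_simps)
  \<comment> \<open>polarization: the diagonal of q determines q\<close>
  have sum: "q x y + q y x = 0" for x y using q_add[of x y] by (simp add: diag)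
  have "\<i> * (q x y - q y x) = 0" for x y
    using q_add[of x "scaleC \<i> y"] by (simp add: diag q_scale right_diff_distrib)
  then have diff: "q x y - q y x = 0" for x y by simp
  have "q x y = 0" for x y
  proof -
    have "2 * q x y = (q x y + q y x) + (q x y - q y x)" by simp
    then show ?thesis using sum[of x y] diff[of x y] by simp
  qed
  then show ?thesis by (simp add: selfadjoint_def q_def)
qed

lemma positive_op_cinner_eq_0:
  assumes S: "positive_op S" and zero: "cinner (S y) y = 0"
  shows "S y = 0"
proof -
  have b: "bop S" and sa: "selfadjoint S"
    using S positive_op_selfadjoint by (auto simp: positive_op_def)
  define u where "u = S y"
  have "- (norm u)\<^sup>2 = 0"
  proof (rule real_linear_coeff_zero[of 1])
    fix t :: real
    have "0 \<le> Re (cinner (S (y + scaleR t u)) (y + scaleR t u))"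
      using S by (simp add: positive_op_def)
    moreover have "cinner (S u) y = cinner u u"
      using sa unfolding selfadjoint_def u_def by simp
    ultimately have "0 \<le> 2 * t * (norm u)\<^sup>2 + t\<^sup>2 * Re (cinner (S u) u)"
      using zero
      by (simp add: bop_linear[OF b] linear_scale[OF bounded_linear.linear[OF bop_bounded_linear[OF b]]]
          cinner_add_left cinner_add_right cinner_scaleR_left cinner_scaleR_right u_def
          Re_cinner_self power2_eq_square algebra_simps)
    then show "2 * t * - (norm u)\<^sup>2 \<le> t\<^sup>2 * Re (cinner (S u) u)" by simp
  qed simp
  then show ?thesis by (simp add: u_def)
qed

lemma positive_op_sum_eq_0:
  assumes "positive_op S" "positive_op R" and "S y + R y = 0"
  shows "S y = 0" "R y = 0"
proof -
  have "cinner (S y) y + cinner (R y) y = 0"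
    using assms(3) by (metis cinner_add_left cinner_zero_left)
  moreover have "0 \<le> Re (cinner (S y) y)" "Im (cinner (S y) y) = 0"
    "0 \<le> Re (cinner (R y) y)" "Im (cinner (R y) y) = 0"
    using assms(1,2) by (auto simp: positive_op_def)
  ultimately have "cinner (S y) y = 0 \<and> cinner (R y) y = 0"
    by (auto simp: complex_eq_iff)
  then show "S y = 0" "R y = 0"
    using assms(1,2) positive_op_cinner_eq_0 by blast+
qed

text \<open>A positive square root S of I - Q commutes with Q, hence with
  sqrt_series Q; then S - sqrt_series Q is killed by S + sqrt_series Q.\<close>

lemma positive_sqrt_unique:
  assumes Q: "contraction Q" "selfadjoint Q"
    and S: "positive_op S" and SS: "\<And>x. S (S x) = x - Q x"
  shows "S = sqrt_series Q"
proof
  fix x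
  let ?R = "sqrt_series Q"
  have bS: "bop S" using S by (simp add: positive_op_def)
  have R: "positive_op ?R" by (rule positive_op_sqrt_series[OF Q])
  have bR: "bop ?R" using R by (simp add: positive_op_def)
  have "S (Q v) = Q (S v)" for v
  proof -
    have "S (Q v) = S (v - S (S v))" using SS[of v] by simp
    also have "\<dots> = Q (S v)" using SS[of "S v"] by (simp add: bop_diff[OF bS])
    finally show ?thesis .
  qed
  then have SR: "S (?R v) = ?R (S v)" for v
    by (rule sqrt_series_intertwine[OF Q(1) Q(1) bop_bounded_linear[OF bS]])
  define y where "y = S x - ?R x"
  have "S y + ?R y = 0"
    using SS[of x] sqrt_series_square[OF Q(1), of x] SR[of x]
    by (simp add: y_def bop_diff[OF bS] bop_diff[OF bR])
  then have "S y = 0" "?R y = 0"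
    using positive_op_sum_eq_0[OF S R] by blast+
  then have "cinner y (S x) = 0" "cinner y (?R x) = 0"
    using positive_op_selfadjoint[OF S] positive_op_selfadjoint[OF R]
    unfolding selfadjoint_def by (metis cinner_zero_left)+
  moreover have "cinner y y = cinner y (S x) - cinner y (?R x)"
    by (subst (2) y_def) (rule cinner_diff_right)
  ultimately have "cinner y y = 0" by simp
  then show "S x = ?R x" by (simp add: y_def cinner_self_eq_0)
qed

lemma op_sqrt_eq_sqrt_series:
  assumes "contraction Q" "selfadjoint Q"
  shows "op_sqrt (\<lambda>x. x - Q x) = sqrt_series Q"
  unfolding op_sqrt_def
proof (rule the_equality)
  show "positive_op (sqrt_series Q) \<and> sqrt_series Q \<circ> sqrt_series Q = (\<lambda>x. x - Q x)"
    using positive_op_sqrt_series[OF assms] sqrt_series_square[OF assms(1)] by (auto simp: comp_def)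
  show "S = sqrt_series Q" if "positive_op S \<and> S \<circ> S = (\<lambda>x. x - Q x)" for S
    using that positive_sqrt_unique[OF assms] by (metis comp_apply)
qed

lemma adj_positive_op: "positive_op S \<Longrightarrow> adj S = S"
  by (rule adj_unique) (metis positive_op_selfadjoint selfadjoint_def)

subsection \<open>Defect operators and the Neumann series\<close>

lemma contraction_adj:
  assumes "contraction P"
  shows "contraction (adj P)"
  using assms norm_adj_le[of P 1] by (simp add: contraction_def adj_bop)

lemma contraction_adj_compose:
  assumes "contraction P"
  shows "contraction (\<lambda>x. adj P (P x))" "selfadjoint (\<lambda>x. adj P (P x))"
proof -
  have P: "bop P" using assms by (simp add: contraction_def)
  show "contraction (\<lambda>x. adj P (P x))"
    using assms contraction_adj[OF assms] bop_compose[OF adj_bop[OF P] P]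
    by (auto simp: contraction_def intro: order_trans)
  show "selfadjoint (\<lambda>x. adj P (P x))"
    by (simp add: selfadjoint_def adj_cinner[OF P] adj_cinner'[OF P])
qed

context
  fixes P :: "'a::chilbert \<Rightarrow> 'a"
  assumes P: "contraction P"
begin

lemma defect_eq_sqrt_series: "defect P = sqrt_series (\<lambda>x. adj P (P x))"
  unfolding defect_def by (rule op_sqrt_eq_sqrt_series[OF contraction_adj_compose[OF P]])

lemma defect_adj_eq_sqrt_series: "defect (adj P) = sqrt_series (\<lambda>x. P (adj P x))"
  using op_sqrt_eq_sqrt_series[OF contraction_adj_compose[OF contraction_adj[OF P]]] P
  by (simp add: defect_def adj_adj contraction_def)

lemma positive_op_defect: "positive_op (defect P)"
  unfolding defect_eq_sqrt_series by (rule positive_op_sqrt_series[OF contraction_adj_compose[OF P]])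

lemma defect_square: "defect P (defect P x) = x - adj P (P x)"
  unfolding defect_eq_sqrt_series by (rule sqrt_series_square[OF contraction_adj_compose(1)[OF P]])

lemma defect_intertwine: "P (defect P x) = defect (adj P) (P x)"
  unfolding defect_eq_sqrt_series defect_adj_eq_sqrt_series
  using P contraction_adj_compose(1)[OF contraction_adj[OF P]]
  by (intro sqrt_series_intertwine contraction_adj_compose)
    (simp_all add: contraction_def bop_bounded_linear adj_adj)

end

lemma op_inv_unique:
  assumes "bop N" "\<And>y. N (T y) = y" "\<And>y. T (N y) = y"
  shows "op_inv T = N"
  unfolding op_inv_def
proof (rule the_equality)
  show "bop N \<and> N \<circ> T = id \<and> T \<circ> N = id" using assms by (auto simp: fun_eq_iff)
  show "S = N" if "bop S \<and> S \<circ> T = id \<and> T \<circ> S = id" for S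
    using that assms(3) by (metis comp_apply id_apply ext)
qed

lemma bop_inverse_id_minus:
  assumes "bounded_linear N" "bop T" "\<And>y. N (y - T y) = y" "\<And>y. N y - T (N y) = y"
  shows "bop N"
proof -
  have "N (scaleC a x) = scaleC a (N x)" for a x
  proof -
    have "scaleC a x = scaleC a (N x) - T (scaleC a (N x))"
      using assms(4)[of x] by (metis bop_scaleC[OF assms(2)] scaleC_diff_right)
    then show ?thesis using assms(3)[of "scaleC a (N x)"] by simp
  qed
  then show ?thesis using assms(1) by (simp add: bop_def)
qed

lemma norm_funpow_le_power:
  fixes T :: "'a::real_normed_vector \<Rightarrow> 'a"
  assumes "\<And>x. norm (T x) \<le> r * norm x" "0 \<le> r"
  shows "norm ((T ^^ k) y) \<le> r ^ k * norm y"
proof (induct k)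
  case (Suc k)
  have "norm ((T ^^ Suc k) y) \<le> r * norm ((T ^^ k) y)" using assms(1)[of "(T ^^ k) y"] by simp
  also have "\<dots> \<le> r * (r ^ k * norm y)" using Suc assms(2) by (intro mult_left_mono) auto
  finally show ?case by simp
qed simp

lemma neumann_series_inverse:
  fixes T :: "'a::chilbert \<Rightarrow> 'a"
  assumes T: "bop T" and bound: "\<And>x. norm (T x) \<le> r * norm x" and r: "0 \<le> r" "r < 1"
  shows "\<exists>N. bop N \<and> (\<forall>y. N (y - T y) = y) \<and> (\<forall>y. N y - T (N y) = y)"
proof -
  define N where "N y = (\<Sum>k. (T ^^ k) y)" for y
  have blT: "bounded_linear T" by (rule bop_bounded_linear[OF T])
  have blk: "bounded_linear (T ^^ k)" for k by (rule bounded_linear_funpow[OF blT])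
  note nk = norm_funpow_le_power[OF bound r(1)]
  have sg: "summable (\<lambda>k. r ^ k * norm y)" for y
    using r by (intro summable_mult2 summable_geometric) simp
  have sn: "summable (\<lambda>k. norm ((T ^^ k) y))" for y
    by (rule summable_comparison_test[OF _ sg]) (use nk in auto)
  have s: "summable (\<lambda>k. (T ^^ k) y)" for y by (rule summable_norm_cancel[OF sn])
  have TN: "T (N y) = N y - y" for y
  proof -
    have "T (N y) = (\<Sum>k. (T ^^ Suc k) y)"
      unfolding N_def by (simp add: bounded_linear.suminf[OF blT s])
    then show ?thesis unfolding N_def using suminf_split_head[OF s] by simp
  qed
  have NT: "N (y - T y) = y" for y
  proof -
    have "N (y - T y) = N y - N (T y)"
      unfolding N_def by (simp add: linear_diff[OF bounded_linear.linear[OF blk]] suminf_diff[OF s s])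
    also have "N (T y) = T (N y)"
      unfolding N_def by (simp add: funpow_swap1 bounded_linear.suminf[OF blT s])
    finally show ?thesis using TN[of y] by simp
  qed
  have "bounded_linear N"
  proof (rule bounded_linear_intro[where K="1 / (1 - r)"])
    show "N (x + y) = N x + N y" for x y
      unfolding N_def by (simp add: linear_add[OF bounded_linear.linear[OF blk]] suminf_add[OF s s])
    show "N (scaleR a x) = scaleR a (N x)" for a x
      unfolding N_def
      by (simp add: linear_scale[OF bounded_linear.linear[OF blk]]
          bounded_linear.suminf[OF bounded_linear_scaleR_right s])
    fix x
    have "norm (N x) \<le> (\<Sum>k. r ^ k * norm x)"
      unfolding N_def by (rule order_trans[OF summable_norm[OF sn] suminf_le[OF nk sn sg]])
    also have "\<dots> = norm x * (1 / (1 - r))"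
      using r by (simp add: suminf_mult2[OF summable_geometric, symmetric] suminf_geometric)
    finally show "norm (N x) \<le> norm x * (1 / (1 - r))" .
  qed
  then have "bop N"
    by (rule bop_inverse_id_minus[OF _ T NT]) (simp add: TN)
  then show ?thesis using NT TN by auto
qed

lemma adj_commute:
  assumes "bop S" "bop T" "\<And>x. S (T x) = T (S x)"
  shows "adj S (adj T y) = adj T (adj S y)"
proof -
  have "adj (\<lambda>x. S (T x)) = adj (\<lambda>x. T (S x))" using assms(3) by simp
  then show ?thesis by (simp add: adj_compose[OF assms(1,2)] adj_compose[OF assms(2,1)] fun_eq_iff)
qed

lemma adj_sandwich:
  assumes D: "bop D" "adj D = D" and bops: "bop F" "bop X" "bop Y" "bop Z"
    and eq: "\<And>y. D (F (D y)) = X y - Y (Z y)"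
  shows "D (adj F (D y)) = adj X y - adj Z (adj Y y)"
proof -
  have "adj (\<lambda>y. D (F (D y))) = adj (\<lambda>y. X y - Y (Z y))" using eq by simp
  moreover have "adj (\<lambda>y. D (F (D y))) = (\<lambda>y. D (adj F (D y)))"
    by (simp add: adj_compose[OF D(1) bop_compose[OF bops(1) D(1)]] adj_compose[OF bops(1) D(1)] D(2))
  moreover have "adj (\<lambda>y. X y - Y (Z y)) = (\<lambda>y. adj X y - adj Z (adj Y y))"
    by (simp add: adj_minus[OF bops(2) bop_compose[OF bops(3,4)]] adj_compose[OF bops(3,4)])
  ultimately show ?thesis by metis
qed

lemma inverse_intertwine:
  assumes S: "bop S" and ST: "\<And>y. S (T y) = T (S y)"
    and left: "\<And>y. N (y - T y) = y" and right: "\<And>y. N y - T (N y) = y"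
  shows "N (S y) = S (N y)"
proof -
  have "S (N y) - T (S (N y)) = S y"
    using right[of y] by (simp add: ST[symmetric] bop_diff[OF S, symmetric])
  then show ?thesis using left[of "S (N y)"] by simp
qed

lemma closure_range_orthogonal_kernel:
  assumes "selfadjoint D" "D k = 0" "m \<in> closure (range D)"
  shows "cinner m k = 0"
proof -
  have "range D \<subseteq> {m. cinner m k = 0}"
    using assms(1,2) by (auto simp: selfadjoint_def)
  then have "closure (range D) \<subseteq> {m. cinner m k = 0}"
    by (rule closure_minimal[OF _ closed_orthogonal])
  then show ?thesis using assms(3) by blast
qed

lemma ops_on_kernel:
  assumes D: "selfadjoint D" "D k = 0" and F: "F \<in> ops_on (closure (range D))"
  shows "F k = 0" "cinner (adj F y) k = 0" "y \<in> closure (range D) \<Longrightarrow> cinner (F y) k = 0"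
proof -
  show Fk: "F k = 0"
    using F closure_range_orthogonal_kernel[OF D] by (simp add: ops_on_def)
  show "cinner (adj F y) k = 0"
    using F by (simp add: ops_on_def adj_cinner' Fk)
  show "cinner (F y) k = 0" if "y \<in> closure (range D)"
    using F that by (intro closure_range_orthogonal_kernel[OF D]) (auto simp: ops_on_def)
qed

subsection \<open>Gamma_n-contractions\<close>

lemma gamma_set_nonempty:
  assumes "n \<ge> 1"
  shows "gamma_set n \<noteq> {}"
proof -
  define v where "v = (\<lambda>j. if j \<in> {1..n-1} then esym n j (\<lambda>_. 0) else 0)"
  have "v \<in> gamma_set n"
    unfolding gamma_set_def using assms by (intro CollectI exI[of _ "\<lambda>_. 0"]) (auto simp: v_def)
  then show ?thesis by blast
qed

lemma gamma_set_last_le_1: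
  assumes "v \<in> gamma_set n"
  shows "cmod (v n) \<le> 1"
proof -
  obtain w where w: "\<forall>j\<in>{1..n}. cmod (w j) \<le> 1" "v n = (\<Prod>j\<in>{1..n}. w j)"
    using assms unfolding gamma_set_def by blast
  have "cmod (v n) = (\<Prod>j\<in>{1..n}. cmod (w j))" by (simp add: w(2) prod_norm)
  also have "\<dots> \<le> 1" by (rule prod_le_1) (use w(1) in auto)
  finally show ?thesis .
qed

lemma gamma_contraction_last:
  assumes gc: "gamma_contraction n S P" and n: "n \<ge> 1"
  shows "contraction P"
proof -
  have last: "gtuple n S P n = P" by (simp add: gtuple_def)
  have bP: "bop P" using gc n last unfolding gamma_contraction_def by (metis atLeastAtMost_iff order_refl)
  have "pvars (PVar n) \<subseteq> {1..n}" using n by simp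
  then have "onorm P \<le> (SUP v\<in>gamma_set n. cmod (peval v (PVar n)))"
    using gc last unfolding gamma_contraction_def by (metis opeval.simps(2))
  also have "\<dots> \<le> 1"
    using gamma_set_nonempty[OF n] gamma_set_last_le_1 by (intro cSUP_least) auto
  finally have "norm (P x) \<le> norm x" for x
    using onorm[OF bop_bounded_linear[OF bP], of x] mult_right_mono[of "onorm P" 1 "norm x"] by simp
  with bP show ?thesis by (simp add: contraction_def)
qed

lemma gamma_contraction_coordinate:
  assumes gc: "gamma_contraction n S P" and j: "j \<in> {1..n-1}"
  shows "bop (S j)" "S j (P x) = P (S j x)"
proof -
  have jn: "j \<in> {1..n}" "n \<in> {1..n}" "gtuple n S P j = S j" "gtuple n S P n = P"
    using j by (auto simp: gtuple_def)
  show "bop (S j)" using gc jn unfolding gamma_contraction_def by metis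
  have "S j \<circ> P = P \<circ> S j" using gc jn unfolding gamma_contraction_def by metis
  then show "S j (P x) = P (S j x)" by (metis comp_apply)
qed

lemma fundamental_tupleD:
  assumes "fundamental_tuple n S P F" "k \<in> {1..n-1}"
  shows "F k \<in> ops_on (defect_space P)" "defect P (F k (defect P y)) = S k y - adj (S (n - k)) (P y)"
  using assms unfolding fundamental_tuple_def by (auto simp: fun_eq_iff)

subsection \<open>The intertwining identity\<close>

locale gamma_char_setting =
  fixes n :: nat and S :: "nat \<Rightarrow> 'a::chilbert \<Rightarrow> 'a" and P :: "'a \<Rightarrow> 'a"
    and A B :: "nat \<Rightarrow> 'a \<Rightarrow> 'a" and i :: nat and z :: complex
  assumes gamma: "gamma_contraction n S P"
    and fundA: "fundamental_tuple n S P A"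
    and fundB: "fundamental_tuple n (\<lambda>i. adj (S i)) (adj P) B"
    and i: "i \<in> {1..n-1}" and z: "cmod z < 1"
begin

abbreviation "j \<equiv> n - i"
abbreviation "D \<equiv> defect P"
abbreviation "E \<equiv> defect (adj P)"
abbreviation "R \<equiv> op_inv (\<lambda>y. y - scaleC z (P y))"
abbreviation "Theta \<equiv> char_fn (adj P) z"

lemma j_range: "j \<in> {1..n-1}" "n - j = i"
  using i by auto

lemma P_bounded: "contraction P" "bop P" "bop (adj P)"
proof -
  have "n \<ge> 1" using i by auto
  then show "contraction P" by (rule gamma_contraction_last[OF gamma])
  then show "bop P" "bop (adj P)" by (simp_all add: contraction_def adj_bop)
qed

lemma S_commute: "bop (S i)" "bop (S j)" "S i (P x) = P (S i x)" "S j (P x) = P (S j x)"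
  using gamma_contraction_coordinate[OF gamma i] gamma_contraction_coordinate[OF gamma j_range(1)] by auto

lemma adj_S_commute: "bop (adj (S i))" "adj (S i) (adj P x) = adj P (adj (S i) x)"
  using adj_bop[OF S_commute(1)] adj_commute[OF S_commute(1) P_bounded(2) S_commute(3)] by auto

lemma defect_identities:
  "positive_op D" "positive_op E" "bop D" "bop E" "adj D = D" "selfadjoint D" "selfadjoint E"
  "D (D x) = x - adj P (P x)" "E (E x) = x - P (adj P x)"
  "P (D x) = E (P x)" "adj P (E x) = D (adj P x)"
  using positive_op_defect[OF P_bounded(1)] positive_op_defect[OF contraction_adj[OF P_bounded(1)]]
    defect_square[OF P_bounded(1)] defect_square[OF contraction_adj[OF P_bounded(1)]]
    defect_intertwine[OF P_bounded(1)] defect_intertwine[OF contraction_adj[OF P_bounded(1)]]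
  by (auto simp: positive_op_def adj_positive_op positive_op_selfadjoint adj_adj[OF P_bounded(2)])

lemma resolvent: "bop R" "R (y - scaleC z (P y)) = y" "R y - scaleC z (P (R y)) = y"
proof -
  have "norm (scaleC z (P x)) \<le> cmod z * norm x" for x
    using P_bounded(1) by (simp add: norm_scaleC contraction_def mult_left_mono)
  then have "\<exists>N. bop N \<and> (\<forall>y. N (y - scaleC z (P y)) = y) \<and> (\<forall>y. N y - scaleC z (P (N y)) = y)"
    using z by (intro neumann_series_inverse[OF bop_scaleC_op[OF P_bounded(2)]]) auto
  then obtain N where N: "bop N" "\<And>y. N (y - scaleC z (P y)) = y" "\<And>y. N y - scaleC z (P (N y)) = y"
    by blast
  moreover have "R = N"
    using N by (intro op_inv_unique) (auto simp: diff_eq_eq)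
  ultimately show "bop R" "R (y - scaleC z (P y)) = y" "R y - scaleC z (P (R y)) = y" by auto
qed

lemma resolvent_intertwine: "R (S j y) = S j (R y)"
  by (rule inverse_intertwine[OF S_commute(2) _ resolvent(2,3)]) (simp add: S_commute(4) bop_scaleC[OF S_commute(2)])

lemma Theta_eq: "Theta x = - adj P x + scaleC z (D (R (E x)))"
  unfolding char_fn_def adj_adj[OF P_bounded(2)] ..

lemma bop_Theta: "bop Theta"
  unfolding Theta_eq[abs_def]
  by (rule bop_plus[OF bop_uminus[OF P_bounded(3)]
        bop_scaleC_op[OF bop_compose[OF defect_identities(3) bop_compose[OF resolvent(1) defect_identities(4)]]]])

lemma fundamental_identities:
  "A i \<in> ops_on (closure (range D))" "A j \<in> ops_on (closure (range D))"
  "B i \<in> ops_on (closure (range E))" "B j \<in> ops_on (closure (range E))"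
  "D (adj (A i) (D y)) = adj (S i) y - adj P (S j y)"
  "D (A j (D y)) = S j y - adj (S i) (P y)"
  "E (B i (E y)) = adj (S i) y - S j (adj P y)"
  "E (adj (B j) (E y)) = S j y - P (adj (S i) y)"
proof -
  note A = fundamental_tupleD[OF fundA] and B = fundamental_tupleD[OF fundB]
  show "A i \<in> ops_on (closure (range D))" "A j \<in> ops_on (closure (range D))"
    "B i \<in> ops_on (closure (range E))" "B j \<in> ops_on (closure (range E))"
    using A(1)[OF i] A(1)[OF j_range(1)] B(1)[OF i] B(1)[OF j_range(1)] by (simp_all add: defect_space_def)
  then have bops: "bop (A i)" "bop (A j)" "bop (B i)" "bop (B j)" by (simp_all add: ops_on_def)
  show "D (A j (D y)) = S j y - adj (S i) (P y)"
    using A(2)[OF j_range(1)] j_range(2) by simp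
  show "E (B i (E y)) = adj (S i) y - S j (adj P y)"
    using B(2)[OF i] by (simp add: adj_adj[OF S_commute(2)])
  show "D (adj (A i) (D y)) = adj (S i) y - adj P (S j y)"
    using adj_sandwich[OF defect_identities(3,5) bops(1) S_commute(1) adj_bop[OF S_commute(2)] P_bounded(2) A(2)[OF i]]
    by (simp add: adj_adj[OF S_commute(2)])
  show "E (adj (B j) (E y)) = S j y - P (adj (S i) y)"
    using adj_sandwich[OF defect_identities(4) adj_positive_op[OF defect_identities(2)] bops(4) adj_bop[OF S_commute(2)] S_commute(1) P_bounded(3)]
      B(2)[OF j_range(1)] j_range(2)
    by (simp add: adj_adj[OF S_commute(1)] adj_adj[OF S_commute(2)] adj_adj[OF P_bounded(2)])
qed

lemma Theta_range_E: "Theta (E w) = D (R (scaleC z w - adj P w))"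
proof -
  define q where "q = w - P (adj P w)"
  define v where "v = - adj P w + scaleC z (R q)"
  have "v - scaleC z (P v) = - adj P w + scaleC z (P (adj P w)) + scaleC z (R q - scaleC z (P (R q)))"
    by (simp add: v_def bop_linear[OF P_bounded(2)] scaleC_add_right scaleC_minus_right scaleC_diff_right)
  also have "\<dots> = scaleC z w - adj P w"
    by (simp add: resolvent(3) q_def scaleC_diff_right)
  finally have "R (scaleC z w - adj P w) = v"
    using resolvent(2)[of v] by simp
  moreover have "Theta (E w) = D v"
    by (simp add: Theta_eq v_def q_def defect_identities(9,11) bop_linear[OF defect_identities(3)])
  ultimately show ?thesis by simp
qed

lemma resolvent_E_B:
  fixes w :: 'a
  defines "u \<equiv> B i (E w) + scaleC z (adj (B j) (E w))"
  shows "R (E u) = adj (S i) w + S j (R (scaleC z w - adj P w))"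
proof -
  have "E u = (adj (S i) w - S j (adj P w)) + scaleC z (S j w - P (adj (S i) w))"
    by (simp add: u_def bop_linear[OF defect_identities(4)] fundamental_identities(7,8))
  also have "\<dots> = (adj (S i) w - scaleC z (P (adj (S i) w))) + S j (scaleC z w - adj P w)"
    by (simp add: bop_linear[OF S_commute(2)] scaleC_diff_right algebra_simps)
  finally show ?thesis
    by (simp add: bop_add[OF resolvent(1)] resolvent(2) resolvent_intertwine)
qed

lemma D_lhs_range_E:
  fixes w :: 'a
  defines "v \<equiv> R (scaleC z w - adj P w)"
  shows "D (adj (A i) (Theta (E w)) + scaleC z (A j (Theta (E w))))
    = scaleC z (adj (S i) w) - adj (S i) (adj P w) + scaleC z (S j v) - adj P (S j v)"
proof -
  have "v - scaleC z (P v) = scaleC z w - adj P w"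
    unfolding v_def by (rule resolvent(3))
  then have "adj (S i) v - scaleC z (adj (S i) (P v)) = scaleC z (adj (S i) w) - adj (S i) (adj P w)"
    by (metis bop_diff[OF adj_S_commute(1)] bop_scaleC[OF adj_S_commute(1)])
  then show ?thesis
    unfolding Theta_range_E v_def[symmetric]
    by (simp add: bop_linear[OF defect_identities(3)] fundamental_identities(5,6) scaleC_diff_right algebra_simps)
qed

lemma D_rhs_range_E:
  fixes w :: 'a
  defines "v \<equiv> R (scaleC z w - adj P w)"
  shows "D (Theta (B i (E w) + scaleC z (adj (B j) (E w))))
    = scaleC z (adj (S i) w) - adj P (adj (S i) w) + scaleC z (S j v) - adj P (S j v)"
proof -
  define u where "u = B i (E w) + scaleC z (adj (B j) (E w))"
  define r where "r = R (E u)"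
  have Eu: "E u = r - scaleC z (P r)"
    using resolvent(3)[of "E u"] by (simp add: r_def)
  have "D (Theta u) = - adj P (E u) + scaleC z (D (D r))"
    by (simp add: Theta_eq r_def bop_linear[OF defect_identities(3)] defect_identities(11))
  also have "\<dots> = scaleC z r - adj P r"
    by (simp add: Eu defect_identities(8) bop_linear[OF P_bounded(3)] scaleC_diff_right)
  also have "r = adj (S i) w + S j v"
    unfolding r_def u_def v_def by (rule resolvent_E_B)
  finally show ?thesis
    by (simp add: u_def bop_linear[OF P_bounded(3)] scaleC_add_right algebra_simps)
qed

text \<open>The A's live on the defect space of P, and -P^* maps the defect space of P^* into
  the orthocomplement of ker D because E P = P D.\<close>

lemma sides_orthogonal_kernel:
  assumes k: "D k = 0"
  shows "cinner (adj (A i) (Theta (E w)) + scaleC z (A j (Theta (E w)))) k = 0"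
    and "cinner (Theta (B i (E w) + scaleC z (adj (B j) (E w)))) k = 0"
proof -
  have "cinner (A j (D y)) k = 0" for y
    using ops_on_kernel(3)[OF defect_identities(6) k fundamental_identities(2)] by (simp add: closure_subset[THEN subsetD])
  then show "cinner (adj (A i) (Theta (E w)) + scaleC z (A j (Theta (E w)))) k = 0"
    using ops_on_kernel(2)[OF defect_identities(6) k fundamental_identities(1)]
    by (simp add: Theta_range_E cinner_add_left cinner_scaleC_left)
  have EPk: "E (P k) = 0" using defect_identities(10)[of k] k by (simp add: bop_zero[OF P_bounded(2)])
  have "cinner (B i (E w)) (P k) = 0"
    using ops_on_kernel(3)[OF defect_identities(7) EPk fundamental_identities(3)] by (simp add: closure_subset[THEN subsetD])
  moreover have "cinner (adj (B j) (E w)) (P k) = 0"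
    by (rule ops_on_kernel(2)[OF defect_identities(7) EPk fundamental_identities(4)])
  moreover have "cinner (D y) k = 0" for y
    using defect_identities(6) k by (simp add: selfadjoint_def)
  ultimately show "cinner (Theta (B i (E w) + scaleC z (adj (B j) (E w)))) k = 0"
    by (simp add: Theta_eq adj_cinner'[OF P_bounded(2)] cinner_add_left cinner_diff_left cinner_minus_left
        cinner_scaleC_left)
qed

lemma intertwining_range_E:
  "adj (A i) (Theta (E w)) + scaleC z (A j (Theta (E w))) = Theta (B i (E w) + scaleC z (adj (B j) (E w)))"
  (is "?l = ?r")
proof -
  have "D (?l - ?r) = 0"
    using D_lhs_range_E D_rhs_range_E adj_S_commute(2) by (simp add: bop_diff[OF defect_identities(3)])
  then have "cinner (?l - ?r) (?l - ?r) = 0"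
    using sides_orthogonal_kernel by (simp add: cinner_diff_left)
  then show ?thesis by (simp add: cinner_self_eq_0)
qed

lemma intertwining:
  assumes "x \<in> defect_space (adj P)"
  shows "adj (A i) (Theta x) + scaleC z (A j (Theta x)) = Theta (B i x + scaleC z (adj (B j) x))"
proof -
  have bops: "bop (A i)" "bop (A j)" "bop (B i)" "bop (B j)"
    using fundamental_identities(1-4) by (simp_all add: ops_on_def)
  have lhs: "bounded_linear (\<lambda>x. adj (A i) (Theta x) + scaleC z (A j (Theta x)))"
    by (intro bop_bounded_linear bop_plus[OF bop_compose[OF adj_bop[OF bops(1)] bop_Theta]
          bop_scaleC_op[OF bop_compose[OF bops(2) bop_Theta]]])
  have rhs: "bounded_linear (\<lambda>x. Theta (B i x + scaleC z (adj (B j) x)))"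
    by (intro bop_bounded_linear bop_compose[OF bop_Theta
          bop_plus[OF bops(3) bop_scaleC_op[OF adj_bop[OF bops(4)]]]])
  have "x \<in> closure (range E)" using assms by (simp add: defect_space_def)
  then show ?thesis by (rule eq_on_closure_range[OF lhs rhs intertwining_range_E])
qed

end

theorem mainTheorem18:
  fixes n :: nat
    and S :: "nat \<Rightarrow> 'a::chilbert \<Rightarrow> 'a" and P :: "'a \<Rightarrow> 'a"
    and A B :: "nat \<Rightarrow> 'a \<Rightarrow> 'a"
  assumes "gamma_contraction n S P"
    and "fundamental_tuple n S P A"
    and "fundamental_tuple n (\<lambda>i. adj (S i)) (adj P) B"
  shows "\<forall>i\<in>{1..n-1}. \<forall>z. cmod z < 1 \<longrightarrow> (\<forall>x\<in>defect_space (adj P).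
           adj (A i) (char_fn (adj P) z x) + scaleC z (A (n - i) (char_fn (adj P) z x))
         = char_fn (adj P) z (B i x + scaleC z (adj (B (n - i)) x)))"
proof (intro ballI allI impI)
  fix i z x
  assume "i \<in> {1..n-1}" "cmod z < 1" "x \<in> defect_space (adj P)"
  then show "adj (A i) (char_fn (adj P) z x) + scaleC z (A (n - i) (char_fn (adj P) z x))
         = char_fn (adj P) z (B i x + scaleC z (adj (B (n - i)) x))"
    using gamma_char_setting.intertwining[of n S P A B i z x] assms
    by (simp add: gamma_char_setting_def)
qed

end
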